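(* Let $k\ge3$ be odd and $p_k^\star<p\le1$. There exists $\varepsilon=\varepsilon(p,k)>0$ such that for every finite graph $G=(V,E)$ without isolated vertices, every round $t\ge0$, every configuration $\bar{\mathbf x}$ and every $u\in V$, under the $(k,p,\mathcal B)$-Edge-Majority dynamics, $$\mathbb E\big[\phi_u^{(t+1)}\mid \mathbf X^{(t)}=\bar{\mathbf x}\big]\le(1-\varepsilon)\,\phi_{\max}^{(t)}.$$
   Context: $N(u)$ is the neighbourhood of $u$, $\delta_u=|N(u)|$. States are in $\{\mathcal R,\mathcal B\}$; $\mathbf X^{(t)}$ is the configuration at round $t$, $R^{(t)}$ the set of $\mathcal R$ nodes, $\phi_u^{(t)}=|N(u)\cap R^{(t)}|/\delta_u$ and $\phi^{(t)}_{\max}=\max_{u\in V}\phi_u^{(t)}$. $(k,p,\mathcal B)$-Edge-Majority: in each round every node $u$ independently samples $k$ neighbours uniformly with replacement; for each sampled $v$, independently, $u$ sees $v$ as $\mathcal B$ with probability $p$ and otherwise sees $v$'s true current state; $u$'s next state is the state seen more often. $F_{p,k}(x)=\Pr[\mathrm{Bin}(k,(1-p)x)\ge(k+1)/2]$. $p_k^\star\in[1/9,1/2)$ is the (unique) value such that for $0\le p<p_k^\star$ the equation $F_{p,k}(x)=x$ on $[0,1]$ has exactly three solutions, for $p=p_k^\star$ exactly two, and for $p>p_k^\star$ only $0$. *)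

theory Defs
  imports "HOL-Probability.Probability"
begin

text \<open>A finite graph on vertex set V (vertices are natural numbers, which is no loss
of generality since every finite graph is isomorphic to one on a subset of nat),
with symmetric, irreflexive adjacency relation E.  A configuration is a map
x :: nat => bool, where True means state R and False means state B.\<close>

definition is_graph :: "nat set \<Rightarrow> (nat \<Rightarrow> nat \<Rightarrow> bool) \<Rightarrow> bool" where
  "is_graph V E \<longleftrightarrow> finite V \<and> (\<forall>v w. E v w \<longrightarrow> v \<in> V \<and> w \<in> V \<and> E w v \<and> v \<noteq> w)"

definition nbhd :: "nat set \<Rightarrow> (nat \<Rightarrow> nat \<Rightarrow> bool) \<Rightarrow> nat \<Rightarrow> nat set" where
  "nbhd V E u = {v \<in> V. E u v}"

definition deg :: "nat set \<Rightarrow> (nat \<Rightarrow> nat \<Rightarrow> bool) \<Rightarrow> nat \<Rightarrow> nat" where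
  "deg V E u = card (nbhd V E u)"

definition phi :: "nat set \<Rightarrow> (nat \<Rightarrow> nat \<Rightarrow> bool) \<Rightarrow> (nat \<Rightarrow> bool) \<Rightarrow> nat \<Rightarrow> real" where
  "phi V E x u = real (card {v \<in> nbhd V E u. x v}) / real (deg V E u)"

definition phi_max :: "nat set \<Rightarrow> (nat \<Rightarrow> nat \<Rightarrow> bool) \<Rightarrow> (nat \<Rightarrow> bool) \<Rightarrow> real" where
  "phi_max V E x = Max ((\<lambda>u. phi V E x u) ` V)"

definition seen_sample :: "nat set \<Rightarrow> (nat \<Rightarrow> nat \<Rightarrow> bool) \<Rightarrow> real \<Rightarrow> (nat \<Rightarrow> bool) \<Rightarrow> nat \<Rightarrow> bool pmf" where
  "seen_sample V E p x u =
     do { v \<leftarrow> pmf_of_set (nbhd V E u);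
          noise \<leftarrow> bernoulli_pmf p;
          return_pmf (\<not> noise \<and> x v) }"

definition next_state :: "nat set \<Rightarrow> (nat \<Rightarrow> nat \<Rightarrow> bool) \<Rightarrow> nat \<Rightarrow> real \<Rightarrow> (nat \<Rightarrow> bool) \<Rightarrow> nat \<Rightarrow> bool pmf" where
  "next_state V E k p x u =
     map_pmf (\<lambda>l. 2 * length (filter id l) \<ge> k + 1) (replicate_pmf k (seen_sample V E p x u))"

text \<open>One round of (k,p,B)-Edge-Majority: all nodes update independently.
(Coordinates outside V are irrelevant and fixed to False.)\<close>
definition edge_majority_step :: "nat set \<Rightarrow> (nat \<Rightarrow> nat \<Rightarrow> bool) \<Rightarrow> nat \<Rightarrow> real \<Rightarrow> (nat \<Rightarrow> bool) \<Rightarrow> (nat \<Rightarrow> bool) pmf" where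
  "edge_majority_step V E k p x = Pi_pmf V False (\<lambda>u. next_state V E k p x u)"

definition F :: "real \<Rightarrow> nat \<Rightarrow> real \<Rightarrow> real" where
  "F p k x = measure_pmf.prob (binomial_pmf k ((1 - p) * x)) {j. 2 * j \<ge> k + 1}"

definition fixpoints :: "real \<Rightarrow> nat \<Rightarrow> real set" where
  "fixpoints p k = {x \<in> {0..1}. F p k x = x}"

definition p_star :: "nat \<Rightarrow> real" where
  "p_star k = (THE q. 1/9 \<le> q \<and> q < 1/2
      \<and> (\<forall>p. 0 \<le> p \<and> p < q \<longrightarrow> card (fixpoints p k) = 3)
      \<and> card (fixpoints q k) = 2
      \<and> (\<forall>p. q < p \<and> p \<le> 1 \<longrightarrow> fixpoints p k = {0}))"

end

theory Submission
  imports Defs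
begin

(*
  For k = 2n+1 one has F_{p,k}(x) = G((1-p)x), where G(y) = P[Bin(2n+1,y) > n] has derivative
  (2n+1) C(2n,n) (y(1-y))^n.  The numerator y G'(y) - G(y) of the derivative of G(y)/y increases
  on [0,1/2] and decreases on [1/2,1], from 0 to -1, so G(y)/y is strictly unimodal on (0,1] with
  maximum M in [9/8,2).  The nonzero fixed points of F_{p,k} are the points y/(1-p) with
  G(y)/y = 1/(1-p); counting them shows p_k^* = 1 - 1/M.  Hence for p > p_k^* we have
  F_{p,k}(x) <= (1-p) M x with (1-p) M < 1, and since E[phi_u^(t+1)] is the average of
  F_{p,k}(phi_v) over the neighbours v of u, epsilon = 1 - (1-p) M works.
*)

section \<open>Strictly unimodal real functions\<close>

lemma strict_mono_on_if_deriv_pos: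
  fixes f f' :: "real \<Rightarrow> real"
  assumes S: "is_interval S"
    and deriv: "\<And>x. x \<in> S \<Longrightarrow> (f has_real_derivative f' x) (at x)"
    and pos: "\<And>x. x \<in> interior S \<Longrightarrow> 0 < f' x"
  shows "strict_mono_on S f"
proof (rule strict_mono_onI)
  fix r s assume rs: "r \<in> S" "s \<in> S" "r < s"
  have sub: "{r..s} \<subseteq> S"
    using mem_is_interval_1_I[OF S rs(1,2)] by auto
  then have "{r<..<s} \<subseteq> interior S" by (intro interior_maximal) auto
  then have "\<exists>y. (f has_real_derivative y) (at x) \<and> 0 < y" if "r < x" "x < s" for x
    using that sub deriv pos by (meson greaterThanLessThan_iff subsetD atLeastAtMost_iff less_imp_le)
  moreover have "continuous_on {r..s} f"
    using sub deriv by (meson DERIV_isCont continuous_at_imp_continuous_on subsetD)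
  ultimately show "f r < f s"
    using DERIV_pos_imp_increasing_open[OF \<open>r < s\<close>] by blast
qed

lemma strict_antimono_on_if_deriv_neg:
  fixes f f' :: "real \<Rightarrow> real"
  assumes "is_interval S"
    and "\<And>x. x \<in> S \<Longrightarrow> (f has_real_derivative f' x) (at x)"
    and "\<And>x. x \<in> interior S \<Longrightarrow> f' x < 0"
  shows "strict_antimono_on S f"
proof -
  have "strict_mono_on S (\<lambda>x. - f x)"
    using assms by (intro strict_mono_on_if_deriv_pos[where f' = "\<lambda>x. - f' x"] DERIV_minus) auto
  then show ?thesis
    by (auto intro!: monotone_onI dest: strict_mono_onD)
qed

lemma unimodal_less_peak:
  fixes f :: "real \<Rightarrow> real"
  assumes "strict_mono_on {a<..c} f" "strict_antimono_on {c..b} f"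
    and "y \<in> {a<..b}" "y \<noteq> c"
  shows "f y < f c"
proof (cases "y < c")
  case True
  then show ?thesis using assms by (auto intro: strict_mono_onD)
next
  case False
  then show ?thesis using assms by (auto intro: monotone_onD)
qed

lemma card_level_set_unimodal:
  fixes f :: "real \<Rightarrow> real"
  assumes inc: "strict_mono_on {a<..c} f" and dec: "strict_antimono_on {c..b} f"
    and cont: "continuous_on {d..b} f" and "a < d" "d < c" "c < b"
    and L: "f d \<le> L" "f b \<le> L" "L < f c"
  shows "card {y \<in> {a<..b}. f y = L} = 2"
proof -
  obtain y1 where y1: "d \<le> y1" "y1 \<le> c" "f y1 = L"
    using IVT'[of f d L c] continuous_on_subset[OF cont] assms by fastforce
  obtain y2 where y2: "c \<le> y2" "y2 \<le> b" "f y2 = L"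
    using IVT2'[of f b L c] continuous_on_subset[OF cont] assms by fastforce
  have "y1 < c" "c < y2"
    using y1 y2 L by (auto simp: order.order_iff_strict)
  have "{y \<in> {a<..b}. f y = L} = {y1, y2}"
  proof (intro set_eqI iffI)
    fix y assume y: "y \<in> {y \<in> {a<..b}. f y = L}"
    show "y \<in> {y1, y2}"
    proof (cases "y \<le> c")
      case True
      then have "y = y1"
        using strict_mono_on_eqD[OF inc, of y1 y] y y1 \<open>a < d\<close> by auto
      then show ?thesis by simp
    next
      case False
      then have "y = y2"
        using dec y y2 by (auto simp: strict_antimono_iff_antimono dest: inj_onD[of f _ y y2])
      then show ?thesis by simp
    qed
  qed (use y1 y2 \<open>a < d\<close> \<open>c < b\<close> in auto)
  then show ?thesis using \<open>y1 < c\<close> \<open>c < y2\<close> by simp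
qed

section \<open>The majority polynomial\<close>

lemma Bernstein_Suc_deriv:
  assumes "i \<le> m"
  shows "(Bernstein (Suc m) (Suc i) has_real_derivative
           real (Suc m) * (Bernstein m i y - Bernstein m (Suc i) y)) (at y)"
proof -
  let ?c = "real (Suc m choose Suc i)"
  have c_Suc_i: "?c * real (Suc i) = real (Suc m) * real (m choose i)"
    using Suc_times_binomial[of i m] by (metis mult.commute of_nat_mult)
  have c_m_i: "?c * real (m - i) = real (Suc m) * real (m choose Suc i)"
    using binomial_absorb_comp[of "Suc m" "Suc i"] by (metis diff_Suc_Suc diff_Suc_1 mult.commute of_nat_mult)
  have "(Bernstein (Suc m) (Suc i) has_real_derivative
      ?c * (real (Suc i) * y ^ i * (1-y) ^ (m - i) - y ^ Suc i * (real (m - i) * (1-y) ^ (m - i - 1)))) (at y)"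
    unfolding Bernstein_def[abs_def] diff_Suc_Suc mult.assoc
    by (intro DERIV_cmult DERIV_mult[THEN DERIV_cong] DERIV_pow[THEN DERIV_cong])
       (auto intro!: derivative_eq_intros simp: algebra_simps)
  also have "?c * (real (Suc i) * y ^ i * (1-y) ^ (m - i) - y ^ Suc i * (real (m - i) * (1-y) ^ (m - i - 1)))
      = (?c * real (Suc i)) * (y ^ i * (1-y) ^ (m - i)) - (?c * real (m - i)) * (y ^ Suc i * (1-y) ^ (m - Suc i))"
    by (simp add: algebra_simps)
  also have "\<dots> = real (Suc m) * (Bernstein m i y - Bernstein m (Suc i) y)"
    unfolding c_Suc_i c_m_i Bernstein_def by (simp add: algebra_simps)
  finally show ?thesis .
qed

lemma Bernstein_tail_deriv:
  assumes "j \<le> m"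
  shows "((\<lambda>y. \<Sum>i=j..m. Bernstein (Suc m) (Suc i) y) has_real_derivative
           real (Suc m) * Bernstein m j y) (at y)"
proof -
  have "((\<lambda>y. \<Sum>i=j..m. Bernstein (Suc m) (Suc i) y) has_real_derivative
      (\<Sum>i=j..m. real (Suc m) * (Bernstein m i y - Bernstein m (Suc i) y))) (at y)"
    by (intro DERIV_sum Bernstein_Suc_deriv) simp
  moreover have "(\<Sum>i=j..m. Bernstein m i y - Bernstein m (Suc i) y) = Bernstein m j y"
    using sum_Suc_diff[of j m "\<lambda>i. - Bernstein m i y"] assms by (simp add: Bernstein_def)
  ultimately show ?thesis
    by (simp only: sum_distrib_left[symmetric])
qed

lemma binomial_odd_Suc_half: "(2*n+1) choose Suc n = (2*n+1) choose n"
proof -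
  have "Suc n \<le> 2*n+1" "2*n+1 - Suc n = n" by simp_all
  then show ?thesis using binomial_symmetric[of "Suc n" "2*n+1"] by metis
qed

lemma central_binomial_Suc: "(2 * Suc n) choose Suc n = 2 * ((2*n+1) choose n)"
proof -
  have "2 * Suc n = Suc (2*n+1)" by simp
  then have "(2 * Suc n) choose Suc n = ((2*n+1) choose n) + ((2*n+1) choose Suc n)"
    by (simp only: binomial_Suc_Suc)
  then show ?thesis unfolding binomial_odd_Suc_half by linarith
qed

definition majority_poly :: "nat \<Rightarrow> real \<Rightarrow> real" where
  "majority_poly n y = (\<Sum>i=n..2*n. Bernstein (2*n+1) (Suc i) y)"

definition majority_density :: "nat \<Rightarrow> real \<Rightarrow> real" where
  "majority_density n y = real (2*n+1) * real ((2*n) choose n) * (y * (1-y)) ^ n"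

lemma majority_poly_deriv: "(majority_poly n has_real_derivative majority_density n y) (at y)"
proof -
  have "(majority_poly n has_real_derivative real (Suc (2*n)) * Bernstein (2*n) n y) (at y)"
    unfolding majority_poly_def[abs_def] using Bernstein_tail_deriv[of n "2*n"] by simp
  moreover have "Bernstein (2*n) n y = real ((2*n) choose n) * (y * (1-y)) ^ n"
    by (simp add: Bernstein_def power_mult_distrib mult_2)
  ultimately show ?thesis
    by (simp add: majority_density_def mult.assoc)
qed

lemma continuous_on_majority_poly: "continuous_on A (majority_poly n)"
  using majority_poly_deriv DERIV_isCont continuous_at_imp_continuous_on by blast

lemma majority_poly_eq_prob:
  assumes "0 \<le> y" "y \<le> 1"
  shows "majority_poly n y = measure_pmf.prob (binomial_pmf (2*n+1) y) {n<..}"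
proof -
  let ?B = "binomial_pmf (2*n+1) y"
  have "{n<..} \<inter> set_pmf ?B = {Suc n..Suc (2*n)} \<inter> set_pmf ?B"
    using assms by (auto simp: set_pmf_binomial_eq split: if_splits)
  then have "measure_pmf.prob ?B {n<..} = measure_pmf.prob ?B {Suc n..Suc (2*n)}"
    by (metis measure_Int_set_pmf)
  also have "\<dots> = (\<Sum>j=Suc n..Suc (2*n). pmf ?B j)"
    by (simp add: measure_measure_pmf_finite)
  also have "\<dots> = (\<Sum>i=n..2*n. pmf ?B (Suc i))"
    by (rule sum.shift_bounds_cl_Suc_ivl)
  also have "\<dots> = majority_poly n y"
    unfolding majority_poly_def using assms by (intro sum.cong) (auto simp: Bernstein_def)
  finally show ?thesis ..
qed

lemma majority_poly_nonneg: "0 \<le> y \<Longrightarrow> y \<le> 1 \<Longrightarrow> 0 \<le> majority_poly n y"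
  by (simp add: majority_poly_eq_prob)

lemma majority_poly_le_one: "0 \<le> y \<Longrightarrow> y \<le> 1 \<Longrightarrow> majority_poly n y \<le> 1"
  by (simp add: majority_poly_eq_prob)

lemma majority_poly_0 [simp]: "majority_poly n 0 = 0"
  by (simp add: majority_poly_def Bernstein_def)

lemma majority_poly_1 [simp]: "majority_poly n 1 = 1"
proof -
  have "majority_poly n 1 = (\<Sum>i=n..2*n. if i = 2*n then 1 else 0)"
    unfolding majority_poly_def by (intro sum.cong) (auto simp: Bernstein_def)
  then show ?thesis by simp
qed

lemma F_eq_majority_poly:
  assumes "0 \<le> (1-p) * x" "(1-p) * x \<le> 1"
  shows "F p (2*n+1) x = majority_poly n ((1-p) * x)"
proof -
  have "{j. 2*j \<ge> 2*n+1+1} = {n<..}" by auto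
  then show ?thesis
    using assms by (simp add: F_def majority_poly_eq_prob)
qed

lemma majority_density_Suc:
  "majority_density (Suc n) y = real (2 * Suc n + 1) * (2 * real ((2*n+1) choose n)) * (y * (1-y)) ^ Suc n"
  unfolding majority_density_def central_binomial_Suc by simp

lemma majority_density_eq:
  "majority_density n y = (real n + 1) * real ((2*n+1) choose n) * (y * (1-y)) ^ n"
proof -
  have "(2*n+1) * ((2*n) choose n) = ((2*n+1) choose Suc n) * (n+1)"
    using Suc_times_binomial_eq[of "2*n" n] by (simp only: Suc_eq_plus1)
  then have "real ((2*n+1) * ((2*n) choose n)) = real (((2*n+1) choose n) * (n+1))"
    unfolding binomial_odd_Suc_half by (rule arg_cong)
  then have "real (2*n+1) * real ((2*n) choose n) = (real n + 1) * real ((2*n+1) choose n)"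
    by (simp only: of_nat_mult of_nat_add of_nat_1 ac_simps)
  then show ?thesis
    unfolding majority_density_def by (rule arg_cong)
qed

lemma majority_poly_Suc_diff:
  "majority_poly (Suc n) y - majority_poly n y = real ((2*n+1) choose n) * (y * (1-y)) ^ Suc n * (2*y - 1)"
proof -
  define c where "c = real ((2*n+1) choose n)"
  define D where "D y = majority_poly (Suc n) y - majority_poly n y - c * ((y * (1-y)) ^ Suc n * (2*y - 1))" for y
  have "(D has_real_derivative 0) (at t)" for t
  proof -
    have "((\<lambda>y. y * (1-y)) has_real_derivative 1 - 2*t) (at t)"
      by (auto intro!: derivative_eq_intros)
    from DERIV_power[OF this, of "Suc n"]
    have "((\<lambda>y. (y * (1-y)) ^ Suc n) has_real_derivative real (Suc n) * ((1 - 2*t) * (t * (1-t)) ^ n)) (at t)"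
      by simp
    moreover have "((\<lambda>y. 2*y - 1) has_real_derivative 2) (at t)"
      by (auto intro!: derivative_eq_intros)
    ultimately have "(D has_real_derivative majority_density (Suc n) t - majority_density n t
        - c * (real (Suc n) * ((1 - 2*t) * (t * (1-t)) ^ n) * (2*t - 1) + 2 * (t * (1-t)) ^ Suc n)) (at t)"
      unfolding D_def[abs_def] by (intro DERIV_diff majority_poly_deriv DERIV_cmult DERIV_mult)
    moreover have "majority_density (Suc n) t - majority_density n t
        - c * (real (Suc n) * ((1 - 2*t) * (t * (1-t)) ^ n) * (2*t - 1) + 2 * (t * (1-t)) ^ Suc n) = 0"
    proof -
      have "real (2 * Suc n + 1) * (2*a) * (t * (1-t)) ^ Suc n - (real n + 1) * a * (t * (1-t)) ^ n
          - a * (real (Suc n) * ((1 - 2*t) * (t * (1-t)) ^ n) * (2*t - 1) + 2 * (t * (1-t)) ^ Suc n) = 0"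
        for a :: real
        by (simp add: algebra_simps)
      then show ?thesis
        unfolding majority_density_Suc majority_density_eq[of n t] c_def .
    qed
    ultimately show ?thesis by simp
  qed
  then have "D y = D 0" using DERIV_isconst_all by blast
  also have "D 0 = 0" by (simp add: D_def)
  finally show ?thesis
    unfolding D_def c_def mult.assoc by linarith
qed

(* G_1(y)/y = 3y - 2y^2 peaks at y = 3/4 with value 9/8, and G_n(3/4) grows with n; this is where
   p_k^* >= 1/9 comes from. *)
lemma majority_poly_three_quarters: "n \<ge> 1 \<Longrightarrow> 27/32 \<le> majority_poly n (3/4)"
proof (induction n rule: nat_induct_at_least)
  case base
  show ?case by (simp add: majority_poly_def Bernstein_def numeral_2_eq_2)
next
  case (Suc n)
  have "0 \<le> majority_poly (Suc n) (3/4) - majority_poly n (3/4)"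
    unfolding majority_poly_Suc_diff by simp
  with Suc show ?case by simp
qed

definition majority_ratio :: "nat \<Rightarrow> real \<Rightarrow> real" where
  "majority_ratio n y = majority_poly n y / y"

definition majority_ratio_numer :: "nat \<Rightarrow> real \<Rightarrow> real" where
  "majority_ratio_numer n y = y * majority_density n y - majority_poly n y"

lemma majority_ratio_deriv:
  "y \<noteq> 0 \<Longrightarrow> (majority_ratio n has_real_derivative majority_ratio_numer n y / y\<^sup>2) (at y)"
  unfolding majority_ratio_def[abs_def] majority_ratio_numer_def
  by (rule DERIV_cong[OF DERIV_divide[OF majority_poly_deriv DERIV_ident]])
     (simp_all add: power2_eq_square)

lemma majority_ratio_numer_deriv:
  "(majority_ratio_numer n has_real_derivative
     y * (real (2*n+1) * real ((2*n) choose n) * (real n * (y * (1-y)) ^ (n - 1) * (1 - 2*y)))) (at y)"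
proof -
  have "((\<lambda>y. y * (1-y)) has_real_derivative 1 - 2*y) (at y)"
    by (auto intro!: derivative_eq_intros)
  from DERIV_cmult[OF DERIV_power[OF this, of n], of "real (2*n+1) * real ((2*n) choose n)"]
  have "(majority_density n has_real_derivative
      real (2*n+1) * real ((2*n) choose n) * (real n * (y * (1-y)) ^ (n - 1) * (1 - 2*y))) (at y)"
    unfolding majority_density_def[abs_def] by (simp add: algebra_simps)
  from DERIV_diff[OF DERIV_mult[OF DERIV_ident this] majority_poly_deriv[of n y]]
  show ?thesis
    unfolding majority_ratio_numer_def[abs_def] by (simp add: mult.commute)
qed

lemma majority_ratio_numer_0 [simp]: "majority_ratio_numer n 0 = 0"
  by (simp add: majority_ratio_numer_def)

lemma majority_ratio_numer_1: "n \<ge> 1 \<Longrightarrow> majority_ratio_numer n 1 = -1"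
  by (simp add: majority_ratio_numer_def majority_density_def)

lemma majority_ratio_numer_sign_change:
  assumes n: "n \<ge> 1"
  obtains c where "1/2 < c" "c < 1"
    "\<And>y. 0 < y \<Longrightarrow> y < c \<Longrightarrow> 0 < majority_ratio_numer n y"
    "\<And>y. c < y \<Longrightarrow> y \<le> 1 \<Longrightarrow> majority_ratio_numer n y < 0"
proof -
  let ?N = "majority_ratio_numer n"
  define C where "C = real (2*n+1) * real ((2*n) choose n) * real n"
  have C: "0 < C" using n by (simp add: C_def)
  have deriv: "(?N has_real_derivative y * (C * (y * (1-y)) ^ (n - 1) * (1 - 2*y))) (at y)" for y
    using majority_ratio_numer_deriv[of n y] by (simp add: C_def algebra_simps)
  have inner_pos: "0 < (y * (1-y)) ^ (n - 1)" if "0 < y" "y < 1" for y :: real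
    using that by simp
  have inc: "strict_mono_on {0..1/2} ?N"
    using C inner_pos by (intro strict_mono_on_if_deriv_pos[OF _ deriv]) (auto simp: is_interval_convex_1)
  have dec: "strict_antimono_on {1/2..1} ?N"
    using C inner_pos
    by (intro strict_antimono_on_if_deriv_neg[OF _ deriv])
       (auto simp: is_interval_convex_1 intro!: mult_pos_neg)
  have half: "0 < ?N (1/2)"
    using strict_mono_onD[OF inc, of 0 "1/2"] by simp
  have cont: "continuous_on {1/2..1} ?N"
    using deriv by (meson DERIV_isCont continuous_at_imp_continuous_on)
  obtain c where c: "1/2 \<le> c" "c \<le> 1" "?N c = 0"
    using IVT2'[of ?N 1 0 "1/2", OF _ _ _ cont] half majority_ratio_numer_1[OF n] by auto
  have "c \<noteq> 1/2" using c(3) half by (metis less_irrefl)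
  moreover have "c \<noteq> 1" using c(3) majority_ratio_numer_1[OF n] by auto
  ultimately have c_bounds: "1/2 < c" "c < 1"
    using c(1,2) by auto
  show thesis
  proof
    show "0 < ?N y" if "0 < y" "y < c" for y
    proof (cases "y \<le> 1/2")
      case True
      then show ?thesis using strict_mono_onD[OF inc, of 0 y] that by simp
    next
      case False
      then show ?thesis using monotone_onD[OF dec, of y c] that c by simp
    qed
    show "?N y < 0" if "c < y" "y \<le> 1" for y
      using monotone_onD[OF dec, of c y] that c c_bounds by simp
  qed (use c_bounds in auto)
qed

lemma majority_ratio_unimodal:
  assumes n: "n \<ge> 1"
  obtains c where "1/2 < c" "c < 1"
    "strict_mono_on {0<..c} (majority_ratio n)" "strict_antimono_on {c..1} (majority_ratio n)"
    "9/8 \<le> majority_ratio n c" "majority_ratio n c < 2"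
proof -
  obtain c where c: "1/2 < c" "c < 1"
    and pos: "\<And>y. 0 < y \<Longrightarrow> y < c \<Longrightarrow> 0 < majority_ratio_numer n y"
    and neg: "\<And>y. c < y \<Longrightarrow> y \<le> 1 \<Longrightarrow> majority_ratio_numer n y < 0"
    using majority_ratio_numer_sign_change[OF n] by blast
  have inc: "strict_mono_on {0<..c} (majority_ratio n)"
    by (rule strict_mono_on_if_deriv_pos[OF _ majority_ratio_deriv]) (auto simp: pos)
  have dec: "strict_antimono_on {c..1} (majority_ratio n)"
    using c
    by (intro strict_antimono_on_if_deriv_neg[OF _ majority_ratio_deriv])
       (auto simp: is_interval_convex_1 neg divide_neg_pos)
  have "9/8 \<le> majority_ratio n (3/4)"
    using majority_poly_three_quarters[OF n] by (simp add: majority_ratio_def)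
  also have "\<dots> \<le> majority_ratio n c"
  proof (cases "c = 3/4")
    case False
    then show ?thesis using unimodal_less_peak[OF inc dec, of "3/4"] by simp
  qed (simp only: order_refl)
  finally have "9/8 \<le> majority_ratio n c" .
  moreover have "majority_ratio n c < 2"
  proof -
    have "majority_ratio n c \<le> 1 / c"
      using majority_poly_le_one[of c n] c by (simp add: majority_ratio_def divide_right_mono)
    also have "1 / c < 2" using c by (simp add: field_simps)
    finally show ?thesis .
  qed
  ultimately show thesis using that c inc dec by blast
qed

lemma majority_ratio_lt_one_near_zero:
  assumes "n \<ge> 1"
  obtains a where "0 < a" "a < 1/2" "majority_ratio n a < 1"
proof -
  have "((\<lambda>y. (majority_poly n y - majority_poly n 0) / (y - 0)) \<longlongrightarrow> majority_density n 0) (at 0)"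
    using majority_poly_deriv[of n 0] unfolding has_field_derivative_iff by simp
  moreover have "majority_density n 0 = 0"
    using assms by (simp add: majority_density_def)
  ultimately have "(majority_ratio n \<longlongrightarrow> 0) (at 0)"
    by (simp add: majority_ratio_def[abs_def])
  then have "(majority_ratio n \<longlongrightarrow> 0) (at_right 0)"
    by (simp add: filterlim_at_split)
  then have "\<forall>\<^sub>F y in at_right 0. majority_ratio n y < 1"
    by (rule order_tendstoD) simp
  then obtain b where "0 < b" and b: "\<And>y. 0 < y \<Longrightarrow> y < b \<Longrightarrow> majority_ratio n y < 1"
    unfolding eventually_at_right_field by blast
  show thesis
    by (rule that[of "min (b/2) (1/4)"]) (use \<open>0 < b\<close> b in auto)
qed

definition majority_ratio_level :: "nat \<Rightarrow> real \<Rightarrow> real set" where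
  "majority_ratio_level n L = {y \<in> {0<..1}. majority_ratio n y = L}"

lemma majority_ratio_level_sets:
  assumes n: "n \<ge> 1"
  obtains M where "9/8 \<le> M" "M < 2"
    "\<And>y. 0 < y \<Longrightarrow> y \<le> 1 \<Longrightarrow> majority_ratio n y \<le> M"
    "\<And>L. 1 \<le> L \<Longrightarrow> L < M \<Longrightarrow> card (majority_ratio_level n L) = 2"
    "card (majority_ratio_level n M) = 1"
    "\<And>L. M < L \<Longrightarrow> majority_ratio_level n L = {}"
proof -
  obtain c where c: "1/2 < c" "c < 1"
    and inc: "strict_mono_on {0<..c} (majority_ratio n)"
    and dec: "strict_antimono_on {c..1} (majority_ratio n)"
    and M: "9/8 \<le> majority_ratio n c" "majority_ratio n c < 2"
    using majority_ratio_unimodal[OF n] by blast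
  obtain a where a: "0 < a" "a < 1/2" "majority_ratio n a < 1"
    using majority_ratio_lt_one_near_zero[OF n] by blast
  have less: "majority_ratio n y < majority_ratio n c" if "y \<in> {0<..1}" "y \<noteq> c" for y
    using unimodal_less_peak[OF inc dec that] .
  then have le: "majority_ratio n y \<le> majority_ratio n c" if "0 < y" "y \<le> 1" for y
    using that by (cases "y = c") (auto simp: order.strict_implies_order)
  have "card (majority_ratio_level n L) = 2" if "1 \<le> L" "L < majority_ratio n c" for L
  proof -
    have "continuous_on {a..1} (majority_ratio n)"
      unfolding majority_ratio_def[abs_def] using a
      by (intro continuous_on_divide continuous_on_majority_poly continuous_on_id) auto
    moreover have "majority_ratio n 1 = 1" by (simp add: majority_ratio_def)
    ultimately show ?thesis
      unfolding majority_ratio_level_def using a c that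
      by (intro card_level_set_unimodal[OF inc dec]) auto
  qed
  moreover have "majority_ratio_level n (majority_ratio n c) = {c}"
  proof -
    have "y = c" if "y \<in> majority_ratio_level n (majority_ratio n c)" for y
      using that less[of y] by (auto simp: majority_ratio_level_def)
    then show ?thesis using c by (auto simp: majority_ratio_level_def)
  qed
  moreover have "majority_ratio_level n L = {}" if "majority_ratio n c < L" for L
    using le that by (force simp: majority_ratio_level_def)
  ultimately show thesis using that M le by simp
qed

section \<open>Fixed points of F and the threshold p_star\<close>

lemma fixpoints_eq_majority_ratio_level:
  assumes "0 \<le> p" "p < 1"
  shows "fixpoints p (2*n+1) = insert 0 ((\<lambda>y. y / (1-p)) ` majority_ratio_level n (1 / (1-p)))"
proof (intro set_eqI iffI)
  fix x assume "x \<in> fixpoints p (2*n+1)"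
  then have x: "0 \<le> x" "x \<le> 1" "F p (2*n+1) x = x" by (auto simp: fixpoints_def)
  have y: "0 \<le> (1-p) * x" "(1-p) * x \<le> 1"
    using x assms by (auto simp: mult_le_one)
  show "x \<in> insert 0 ((\<lambda>y. y / (1-p)) ` majority_ratio_level n (1 / (1-p)))"
  proof (cases "x = 0")
    case False
    then have "(1-p) * x \<in> majority_ratio_level n (1 / (1-p))"
      using x y assms F_eq_majority_poly[OF y, of n]
      by (auto simp: majority_ratio_level_def majority_ratio_def field_simps)
    moreover have "x = (1-p) * x / (1-p)" using assms by simp
    ultimately show ?thesis by blast
  qed simp
next
  fix x assume "x \<in> insert 0 ((\<lambda>y. y / (1-p)) ` majority_ratio_level n (1 / (1-p)))"
  then consider "x = 0" | y where "y \<in> majority_ratio_level n (1 / (1-p))" "x = y / (1-p)"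
    by blast
  then show "x \<in> fixpoints p (2*n+1)"
  proof cases
    case 1
    then show ?thesis using F_eq_majority_poly[of p 0 n] by (simp add: fixpoints_def)
  next
    case (2 y)
    then have y: "0 < y" "y \<le> 1" "majority_poly n y / y = 1 / (1-p)"
      by (auto simp: majority_ratio_level_def majority_ratio_def)
    then have "majority_poly n y = x"
      using 2(2) by (simp add: nonzero_divide_eq_eq)
    have "(1-p) * x = y" using 2 assms by simp
    then show ?thesis
      using F_eq_majority_poly[of p x n] majority_poly_nonneg[of y n] majority_poly_le_one[of y n] y
        \<open>majority_poly n y = x\<close>
      by (simp add: fixpoints_def)
  qed
qed

lemma card_fixpoints:
  assumes "0 \<le> p" "p < 1" "0 < card (majority_ratio_level n (1 / (1-p)))"
  shows "card (fixpoints p (2*n+1)) = Suc (card (majority_ratio_level n (1 / (1-p))))"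
proof -
  have "inj_on (\<lambda>y. y / (1-p)) (majority_ratio_level n (1 / (1-p)))"
    using assms by (auto simp: inj_on_def)
  moreover have "0 \<notin> (\<lambda>y. y / (1-p)) ` majority_ratio_level n (1 / (1-p))"
    using assms by (auto simp: majority_ratio_level_def)
  ultimately show ?thesis
    unfolding fixpoints_eq_majority_ratio_level[OF assms(1,2)]
    using card_ge_0_finite[OF assms(3)] by (simp add: card_image)
qed

lemma fixpoints_p_eq_1: "fixpoints 1 (2*n+1) = {0}"
  using F_eq_majority_poly[of 1 _ n] by (auto simp: fixpoints_def)

(* Two admissible values cannot differ: at their midpoint there would be three fixed points
   and only the fixed point 0 at the same time. *)
lemma p_star_eqI:
  assumes "1/9 \<le> q" "q < 1/2"
    and below: "\<And>p. 0 \<le> p \<Longrightarrow> p < q \<Longrightarrow> card (fixpoints p k) = 3"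
    and "card (fixpoints q k) = 2"
    and above: "\<And>p. q < p \<Longrightarrow> p \<le> 1 \<Longrightarrow> fixpoints p k = {0}"
  shows "p_star k = q"
  unfolding p_star_def
proof (rule the_equality)
  fix q' assume q': "1/9 \<le> q' \<and> q' < 1/2
      \<and> (\<forall>p. 0 \<le> p \<and> p < q' \<longrightarrow> card (fixpoints p k) = 3)
      \<and> card (fixpoints q' k) = 2
      \<and> (\<forall>p. q' < p \<and> p \<le> 1 \<longrightarrow> fixpoints p k = {0})"
  define r where "r = (q + q') / 2"
  have "0 \<le> r" "r \<le> 1" using assms q' by (auto simp: r_def)
  show "q' = q"
  proof (rule linorder_cases[of q' q])
    assume "q' < q"
    then have "card (fixpoints r k) = 3" "fixpoints r k = {0}"
      using below above q' \<open>0 \<le> r\<close> \<open>r \<le> 1\<close> by (auto simp: r_def)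
    then show ?thesis by simp
  next
    assume "q < q'"
    then have "card (fixpoints r k) = 3" "fixpoints r k = {0}"
      using below above q' \<open>0 \<le> r\<close> \<open>r \<le> 1\<close> by (auto simp: r_def)
    then show ?thesis by simp
  qed
qed (use assms in blast)

lemma p_star_majority:
  assumes n: "n \<ge> 1"
  obtains M where "9/8 \<le> M" "M < 2"
    "\<And>y. 0 \<le> y \<Longrightarrow> y \<le> 1 \<Longrightarrow> majority_poly n y \<le> M * y"
    "p_star (2*n+1) = 1 - 1/M"
proof -
  obtain M where M: "9/8 \<le> M" "M < 2"
    and le: "\<And>y. 0 < y \<Longrightarrow> y \<le> 1 \<Longrightarrow> majority_ratio n y \<le> M"
    and two: "\<And>L. 1 \<le> L \<Longrightarrow> L < M \<Longrightarrow> card (majority_ratio_level n L) = 2"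
    and one: "card (majority_ratio_level n M) = 1"
    and none: "\<And>L. M < L \<Longrightarrow> majority_ratio_level n L = {}"
    using majority_ratio_level_sets[OF n] by blast
  have level_of_p: "1 / (1-p) < M \<longleftrightarrow> p < 1 - 1/M" "1 \<le> 1 / (1-p)" if "0 \<le> p" "p < 1" for p
    using M that by (auto simp: field_simps)
  have "p_star (2*n+1) = 1 - 1/M"
  proof (rule p_star_eqI)
    show "1/9 \<le> 1 - 1/M" "1 - 1/M < 1/2"
      using M by (auto simp: field_simps)
    show "card (fixpoints p (2*n+1)) = 3" if p: "0 \<le> p" "p < 1 - 1/M" for p
    proof -
      have "0 < 1/M" using M by simp
      then have "p < 1" using p by linarith
      then have "card (majority_ratio_level n (1 / (1-p))) = 2"
        using two level_of_p p by simp
      then show ?thesis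
        using card_fixpoints[OF p(1) \<open>p < 1\<close>] by simp
    qed
    have "0 \<le> 1 - 1/M" "1 - 1/M < 1" "1 / (1 - (1 - 1/M)) = M" using M by auto
    then show "card (fixpoints (1 - 1/M) (2*n+1)) = 2"
      using card_fixpoints[of "1 - 1/M" n] one by simp
    show "fixpoints p (2*n+1) = {0}" if "1 - 1/M < p" "p \<le> 1" for p
    proof (cases "p = 1")
      case False
      have "0 < 1/M" "1/M < 1" using M by auto
      then have p: "0 \<le> p" "p < 1" using that False by (linarith, simp)
      then have "M < 1 / (1-p)"
        using that M by (auto simp: field_simps)
      then show ?thesis
        using fixpoints_eq_majority_ratio_level[OF p, of n] none by simp
    qed (use fixpoints_p_eq_1 in simp)
  qed
  moreover have "majority_poly n y \<le> M * y" if "0 \<le> y" "y \<le> 1" for y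
    using le[of y] that by (cases "y = 0") (auto simp: majority_ratio_def field_simps)
  ultimately show thesis using that M by blast
qed

lemma one_ninth_le_p_star:
  assumes "n \<ge> 1"
  shows "1/9 \<le> p_star (2*n+1)"
proof -
  obtain M where M: "9/8 \<le> M" "p_star (2*n+1) = 1 - 1/M"
    using p_star_majority[OF assms] by blast
  then have "1/M \<le> 8/9" by (simp add: field_simps)
  then show ?thesis using M(2) by linarith
qed

lemma F_contraction_above_p_star:
  assumes n: "n \<ge> 1" and "p_star (2*n+1) < p" "p \<le> 1"
  obtains c where "0 \<le> c" "c < 1" "\<And>x. 0 \<le> x \<Longrightarrow> x \<le> 1 \<Longrightarrow> F p (2*n+1) x \<le> c * x"
proof -
  obtain M where M: "9/8 \<le> M"
    and G_le: "\<And>y. 0 \<le> y \<Longrightarrow> y \<le> 1 \<Longrightarrow> majority_poly n y \<le> M * y"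
    and p_star: "p_star (2*n+1) = 1 - 1/M"
    using p_star_majority[OF n] by blast
  have "1/M \<le> 1" using M by simp
  then have p: "0 \<le> p" "1 - p < 1/M"
    using assms(2) p_star by linarith+
  have "F p (2*n+1) x \<le> ((1-p) * M) * x" if "0 \<le> x" "x \<le> 1" for x
  proof -
    have y: "0 \<le> (1-p) * x" "(1-p) * x \<le> 1"
      using that p assms(3) by (auto simp: mult_le_one)
    then have "F p (2*n+1) x \<le> M * ((1-p) * x)"
      using F_eq_majority_poly[OF y, of n] G_le by simp
    then show ?thesis by (simp only: ac_simps)
  qed
  moreover have "0 \<le> (1-p) * M" "(1-p) * M < 1"
    using p assms(3) M by (simp_all add: field_simps)
  ultimately show thesis
    using that by blast
qed

section \<open>One round of Edge-Majority\<close>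

lemma phi_nonneg: "0 \<le> phi V E x u"
  by (simp add: phi_def)

lemma phi_le_one: "finite (nbhd V E u) \<Longrightarrow> phi V E x u \<le> 1"
  unfolding phi_def deg_def
  using card_mono[of "nbhd V E u" "{v \<in> nbhd V E u. x v}"] by (auto simp: divide_le_eq_1)

lemma phi_le_phi_max: "finite V \<Longrightarrow> u \<in> V \<Longrightarrow> phi V E x u \<le> phi_max V E x"
  unfolding phi_max_def by (intro Max_ge) auto

lemma seen_sample_eq_bernoulli:
  assumes fin: "finite (nbhd V E v)" and ne: "nbhd V E v \<noteq> {}" and p: "0 \<le> p" "p \<le> 1"
  shows "seen_sample V E p x v = bernoulli_pmf ((1-p) * phi V E x v)"
proof (rule pmf_eqI)
  let ?N = "nbhd V E v"
  have noise: "pmf (bernoulli_pmf p \<bind> (\<lambda>noise. return_pmf (\<not> noise \<and> b))) True = (1-p) * of_bool b"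
    for b
    using p by (simp add: pmf_bind)
  have "pmf (seen_sample V E p x v) True
      = (\<Sum>w\<in>?N. pmf (bernoulli_pmf p \<bind> (\<lambda>noise. return_pmf (\<not> noise \<and> x w))) True) / real (card ?N)"
    unfolding seen_sample_def pmf_bind integral_pmf_of_set[OF ne fin] by simp
  also have "\<dots> = (\<Sum>w\<in>?N. (1-p) * of_bool (x w)) / real (card ?N)"
    by (simp only: noise)
  also have "\<dots> = (1-p) * phi V E x v"
    using fin by (simp add: phi_def deg_def sum_distrib_left[symmetric] Int_def conj_commute)
  finally have True: "pmf (seen_sample V E p x v) True = (1-p) * phi V E x v" .
  have "0 \<le> (1-p) * phi V E x v" "(1-p) * phi V E x v \<le> 1"
    using p phi_nonneg phi_le_one[OF fin] by (auto simp: mult_le_one)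
  then show "pmf (seen_sample V E p x v) b = pmf (bernoulli_pmf ((1-p) * phi V E x v)) b" for b
    using True by (cases b) (simp_all add: pmf_False_conv_True)
qed

lemma pmf_next_state_True:
  assumes "finite (nbhd V E v)" "nbhd V E v \<noteq> {}" "0 \<le> p" "p \<le> 1"
  shows "pmf (next_state V E k p x v) True = F p k (phi V E x v)"
proof -
  let ?r = "(1-p) * phi V E x v"
  have "?r \<in> {0..1}"
    using assms phi_nonneg phi_le_one[OF assms(1)] by (auto simp: mult_le_one)
  have "next_state V E k p x v
      = map_pmf (\<lambda>j. k + 1 \<le> 2 * j) (map_pmf (length \<circ> filter id) (replicate_pmf k (bernoulli_pmf ?r)))"
    unfolding next_state_def seen_sample_eq_bernoulli[OF assms] map_pmf_comp by (simp add: o_def)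
  also have "\<dots> = map_pmf (\<lambda>j. k + 1 \<le> 2 * j) (binomial_pmf k ?r)"
    using binomial_pmf_altdef[OF \<open>?r \<in> {0..1}\<close>] by simp
  finally show ?thesis
    by (simp add: pmf_map F_def vimage_def)
qed

lemma expectation_phi_step:
  assumes g: "is_graph V E" and ne: "\<forall>v\<in>V. nbhd V E v \<noteq> {}" and p: "0 \<le> p" "p \<le> 1"
  shows "measure_pmf.expectation (edge_majority_step V E k p x) (\<lambda>y. phi V E y u)
     = (\<Sum>v\<in>nbhd V E u. F p k (phi V E x v)) / real (deg V E u)"
proof -
  let ?P = "edge_majority_step V E k p x"
  have finV: "finite V" using g by (simp add: is_graph_def)
  then have finN: "finite (nbhd V E w)" for w by (simp add: nbhd_def)
  have coord: "measure_pmf.expectation ?P (\<lambda>y. of_bool (y v)) = F p k (phi V E x v)"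
    if "v \<in> nbhd V E u" for v
  proof -
    have v: "v \<in> V" using that by (simp add: nbhd_def)
    have "measure_pmf.expectation ?P (\<lambda>y. of_bool (y v))
        = measure_pmf.expectation (map_pmf (\<lambda>y. y v) ?P) (of_bool :: bool \<Rightarrow> real)"
      by simp
    also have "map_pmf (\<lambda>y. y v) ?P = next_state V E k p x v"
      unfolding edge_majority_step_def using finV v by (simp add: Pi_pmf_component)
    also have "measure_pmf.expectation (next_state V E k p x v) of_bool = pmf (next_state V E k p x v) True"
      by (subst integral_measure_pmf[of "{True}"]) auto
    also have "\<dots> = F p k (phi V E x v)"
      using pmf_next_state_True[OF finN] ne v p by blast
    finally show ?thesis .
  qed
  have "phi V E y u = (\<Sum>v\<in>nbhd V E u. of_bool (y v)) / real (deg V E u)" for y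
    using finN[of u] by (simp add: phi_def Int_def conj_commute)
  then have "measure_pmf.expectation ?P (\<lambda>y. phi V E y u)
      = (\<Sum>v\<in>nbhd V E u. measure_pmf.expectation ?P (\<lambda>y. of_bool (y v))) / real (deg V E u)"
    by (simp add: Bochner_Integration.integral_sum measure_pmf.integrable_const_bound[where B=1])
  also have "\<dots> = (\<Sum>v\<in>nbhd V E u. F p k (phi V E x v)) / real (deg V E u)"
    by (simp add: coord)
  finally show ?thesis .
qed

lemma expectation_phi_step_le:
  assumes g: "is_graph V E" and ne: "\<forall>v\<in>V. nbhd V E v \<noteq> {}" and u: "u \<in> V"
    and p: "0 \<le> p" "p \<le> 1"
    and F_le: "\<And>y. 0 \<le> y \<Longrightarrow> y \<le> 1 \<Longrightarrow> F p k y \<le> c * y" and "0 \<le> c"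
  shows "measure_pmf.expectation (edge_majority_step V E k p x) (\<lambda>y. phi V E y u)
           \<le> c * phi_max V E x"
proof -
  have finV: "finite V" using g by (simp add: is_graph_def)
  then have finN: "finite (nbhd V E w)" for w by (simp add: nbhd_def)
  have "0 < real (deg V E u)"
    using ne u finN[of u] by (simp add: deg_def card_gt_0_iff)
  moreover have "F p k (phi V E x v) \<le> c * phi_max V E x" if "v \<in> nbhd V E u" for v
  proof -
    have "v \<in> V" using that by (simp add: nbhd_def)
    have "F p k (phi V E x v) \<le> c * phi V E x v"
      using F_le phi_nonneg phi_le_one[OF finN] by blast
    also have "\<dots> \<le> c * phi_max V E x"
      using phi_le_phi_max[OF finV \<open>v \<in> V\<close>] \<open>0 \<le> c\<close> by (rule mult_left_mono)
    finally show ?thesis .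
  qed
  ultimately have "(\<Sum>v\<in>nbhd V E u. F p k (phi V E x v)) / real (deg V E u) \<le> c * phi_max V E x"
    using sum_mono[of "nbhd V E u" "\<lambda>v. F p k (phi V E x v)" "\<lambda>_. c * phi_max V E x"]
    by (simp add: deg_def divide_le_eq mult.commute)
  then show ?thesis
    unfolding expectation_phi_step[OF g ne p] .
qed

theorem lemma5p5:
  fixes k :: nat and p :: real
  assumes "odd k" and "k \<ge> 3" and "p_star k < p" and "p \<le> 1"
  shows "\<exists>\<epsilon>>0. \<forall>(V::nat set) E x u.
           is_graph V E \<and> (\<forall>v\<in>V. nbhd V E v \<noteq> {}) \<and> u \<in> V \<longrightarrow>
           measure_pmf.expectation (edge_majority_step V E k p x) (\<lambda>y. phi V E y u)
             \<le> (1 - \<epsilon>) * phi_max V E x"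
proof -
  obtain n where k: "k = 2*n+1"
    using assms(1) oddE by (metis Suc_eq_plus1 mult_2)
  then have n: "n \<ge> 1" using assms(2) by simp
  have p: "0 \<le> p"
    using one_ninth_le_p_star[OF n] assms(3) k by simp
  obtain c where c: "0 \<le> c" "c < 1" and F_le: "\<And>x. 0 \<le> x \<Longrightarrow> x \<le> 1 \<Longrightarrow> F p k x \<le> c * x"
    using F_contraction_above_p_star[OF n] assms(3,4) k by blast
  show ?thesis
  proof (intro exI[of _ "1 - c"] conjI allI impI)
    show "0 < 1 - c" using c by simp
    fix V :: "nat set" and E x u
    assume "is_graph V E \<and> (\<forall>v\<in>V. nbhd V E v \<noteq> {}) \<and> u \<in> V"
    then show "measure_pmf.expectation (edge_majority_step V E k p x) (\<lambda>y. phi V E y u)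
        \<le> (1 - (1 - c)) * phi_max V E x"
      using expectation_phi_step_le[OF _ _ _ p assms(4) F_le c(1)] by simp
  qed
qed

end
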